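(* Let $A\subseteq\mathbb N$ be such that both $A$ and $\mathbb N\setminus A$ are infinite. Then there is no $\{\cup,\cap,\overline{\phantom{c}},+,/\}$-circuit $C$ with $I(C)=A$. (In particular, no such circuit describes the set of prime numbers.)
   Context: Natural numbers include $0$. For $A,B\subseteq\mathbb N$: $A\cup B$, $A\cap B$ are the usual operations, $\overline{A}=\mathbb N\setminus A$, $A+B=\{a+b: a\in A, b\in B\}$, $A\times B=\{a\cdot b: a\in A, b\in B\}$, and $A/B=\{c\in\mathbb N:\exists a\in A\ \exists b\in B\setminus\{0\}: a=c\cdot b\}$ (exact integer division without remainder or rounding). For $\emptyset\ne\mathcal O\subseteq\{\cup,\cap,\overline{\phantom{c}},+,\times,/\}$, an $\mathcal O$-circuit $C=(V,E,g_C,\alpha)$ is a finite acyclic directed multigraph with gate set $V\subseteq\mathbb N$, every gate having indegree $0$, $1$ or $2$, a designated output gate $g_C\in V$, and a labeling $\alpha$: gates of indegree $0$ (input gates) are labeled by natural numbers, gates of indegree $1$ are labeled $\overline{\phantom{c}}$ (allowed only if $\overline{\phantom{c}}\in\mathcal O$), and gates of indegree $2$ are labeled by an operation in $\mathcal O\setminus\{\overline{\phantom{c}}\}$. The result set $I(g)\subseteq\mathbb N$ is defined inductively: $I(g)=\{\alpha(g)\}$ for an input gate; $I(g)=\mathbb N\setminus I(p)$ for a complement gate with predecessor $p$; $I(g)=I(g_1)\,\sigma\,I(g_2)$ for a gate labeled $\sigma$ with predecessors $g_1\le g_2$ (a double edge from one gate gives $g_1=g_2$). $I(C)=I(g_C)$.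 *)

theory Defs
  imports Main
begin

definition set_plus_nat :: "nat set \<Rightarrow> nat set \<Rightarrow> nat set" where
  "set_plus_nat A B = {a + b | a b. a \<in> A \<and> b \<in> B}"

definition set_times_nat :: "nat set \<Rightarrow> nat set \<Rightarrow> nat set" where
  "set_times_nat A B = {a * b | a b. a \<in> A \<and> b \<in> B}"

definition set_div_nat :: "nat set \<Rightarrow> nat set \<Rightarrow> nat set" where
  "set_div_nat A B = {c. \<exists>a\<in>A. \<exists>b\<in>B - {0}. a = c * b}"

datatype op = OUn | OInt | OCompl | OPlus | OTimes | ODiv

datatype label = LInput nat | LGate op

text \<open>A circuit: finite gate set V of naturals, for each gate the list of its
  predecessors (the in-edges of the multigraph, sorted so that g1 \<le> g2;
  a double edge gives [p, p]), an output gate and a labelling.\<close>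
record circuit =
  gates :: "nat set"
  preds :: "nat \<Rightarrow> nat list"
  outg  :: nat
  lab   :: "nat \<Rightarrow> label"

definition edge_rel :: "circuit \<Rightarrow> (nat \<times> nat) set" where
  "edge_rel C = {(p, g). g \<in> gates C \<and> p \<in> set (preds C g)}"

definition is_circuit :: "op set \<Rightarrow> circuit \<Rightarrow> bool" where
  "is_circuit Ops C \<longleftrightarrow>
     Ops \<noteq> {} \<and>
     finite (gates C) \<and> outg C \<in> gates C \<and>
     acyclic (edge_rel C) \<and>
     (\<forall>g \<in> gates C.
        set (preds C g) \<subseteq> gates C \<and> sorted (preds C g) \<and> length (preds C g) \<le> 2 \<and>
        (length (preds C g) = 0 \<longrightarrow> (\<exists>n. lab C g = LInput n)) \<and>
        (length (preds C g) = 1 \<longrightarrow> lab C g = LGate OCompl \<and> OCompl \<in> Ops) \<and>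
        (length (preds C g) = 2 \<longrightarrow> (\<exists>\<sigma>. lab C g = LGate \<sigma> \<and> \<sigma> \<in> Ops \<and> \<sigma> \<noteq> OCompl)))"

fun apply_op :: "op \<Rightarrow> nat set \<Rightarrow> nat set \<Rightarrow> nat set" where
  "apply_op OUn A B = A \<union> B"
| "apply_op OInt A B = A \<inter> B"
| "apply_op OCompl A B = UNIV - A"
| "apply_op OPlus A B = set_plus_nat A B"
| "apply_op OTimes A B = set_times_nat A B"
| "apply_op ODiv A B = set_div_nat A B"

text \<open>val is an evaluation of C: it satisfies the inductive defining equations of I(g)
  at every gate (by acyclicity there is exactly one such assignment on the gates).\<close>
definition is_eval :: "circuit \<Rightarrow> (nat \<Rightarrow> nat set) \<Rightarrow> bool" where
  "is_eval C val \<longleftrightarrow>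
     (\<forall>g \<in> gates C. val g =
        (case lab C g of
           LInput n \<Rightarrow> {n}
         | LGate OCompl \<Rightarrow> UNIV - val (preds C g ! 0)
         | LGate \<sigma> \<Rightarrow> apply_op \<sigma> (val (preds C g ! 0)) (val (preds C g ! 1))))"

definition result :: "circuit \<Rightarrow> nat set" where
  "result C = (THE S. \<exists>val. is_eval C val \<and> val (outg C) = S)"

end

theory Submission
  imports Defs
begin

text \<open>By induction over the gates, every set computed by a circuit over union, intersection,
  complement, addition and division is finite or cofinite: singletons are finite, and this class
  is closed under the five operations. Sums and quotients of finite sets are finite, a quotient
  never exceeding its dividend. If \<open>A\<close> is cofinite and \<open>b \<in> B\<close>, then \<open>A + B\<close> contains
  \<open>A + b\<close>, which misses only numbers below \<open>b\<close> and translates of the finitely many non-elements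
  of \<open>A\<close>; and for \<open>b \<noteq> 0\<close>, \<open>A / B\<close> contains every \<open>c\<close> with \<open>c * b \<in> A\<close>, so it misses only
  preimages of non-elements of \<open>A\<close> under the injective map \<open>c \<mapsto> c * b\<close>. Multiplication must be
  excluded: \<open>{2} \<times> \<nat>\<close> is the set of even numbers.\<close>

definition finite_or_cofinite :: "nat set \<Rightarrow> bool" where
  "finite_or_cofinite S \<longleftrightarrow> finite S \<or> finite (UNIV - S)"

lemma finite_or_cofinite_singleton: "finite_or_cofinite {n}"
  unfolding finite_or_cofinite_def by simp

lemma finite_or_cofinite_Compl: "finite_or_cofinite A \<Longrightarrow> finite_or_cofinite (UNIV - A)"
  unfolding finite_or_cofinite_def by (auto simp: Diff_Diff_Int)

lemma finite_or_cofinite_Un: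
  "finite_or_cofinite A \<Longrightarrow> finite_or_cofinite B \<Longrightarrow> finite_or_cofinite (A \<union> B)"
  unfolding finite_or_cofinite_def Diff_Un by (auto intro: finite_Int)

lemma finite_or_cofinite_Int:
  "finite_or_cofinite A \<Longrightarrow> finite_or_cofinite B \<Longrightarrow> finite_or_cofinite (A \<inter> B)"
  unfolding finite_or_cofinite_def Diff_Int by (auto intro: finite_Int)

lemma set_plus_nat_commute: "set_plus_nat A B = set_plus_nat B A"
  unfolding set_plus_nat_def by (auto; metis add.commute)

lemma finite_set_plus_nat:
  assumes "finite A" and "finite B"
  shows "finite (set_plus_nat A B)"
proof -
  have "set_plus_nat A B = (\<lambda>(a, b). a + b) ` (A \<times> B)"
    unfolding set_plus_nat_def by auto
  with assms show ?thesis by simp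
qed

lemma cofinite_set_plus_nat:
  assumes "finite (UNIV - A)" and "b \<in> B"
  shows "finite (UNIV - set_plus_nat A B)"
proof (rule finite_subset)
  show "UNIV - set_plus_nat A B \<subseteq> {..<b} \<union> (\<lambda>a. a + b) ` (UNIV - A)"
  proof
    fix n assume n: "n \<in> UNIV - set_plus_nat A B"
    show "n \<in> {..<b} \<union> (\<lambda>a. a + b) ` (UNIV - A)"
    proof (cases "b \<le> n")
      case True
      then have "n = (n - b) + b" by simp
      with n \<open>b \<in> B\<close> have "n - b \<notin> A"
        unfolding set_plus_nat_def by blast
      with \<open>n = (n - b) + b\<close> show ?thesis by blast
    qed simp
  qed
  show "finite ({..<b} \<union> (\<lambda>a. a + b) ` (UNIV - A))"
    using assms(1) by simp
qed

lemma finite_or_cofinite_set_plus_nat: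
  assumes "finite_or_cofinite A" and "finite_or_cofinite B"
  shows "finite_or_cofinite (set_plus_nat A B)"
proof (cases "finite A \<and> finite B \<or> A = {} \<or> B = {}")
  case True
  moreover have "A = {} \<or> B = {} \<Longrightarrow> set_plus_nat A B = {}"
    unfolding set_plus_nat_def by blast
  ultimately show ?thesis
    unfolding finite_or_cofinite_def using finite_set_plus_nat by fastforce
next
  case False
  then obtain a b where "a \<in> A" "b \<in> B" by blast
  moreover from False assms have "finite (UNIV - A) \<or> finite (UNIV - B)"
    unfolding finite_or_cofinite_def by blast
  ultimately show ?thesis
    using cofinite_set_plus_nat[of A b B] cofinite_set_plus_nat[of B a A]
    unfolding finite_or_cofinite_def set_plus_nat_commute[of B A] by blast
qed

lemma finite_set_div_nat:
  assumes "finite A"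
  shows "finite (set_div_nat A B)"
proof (rule finite_subset)
  show "set_div_nat A B \<subseteq> (\<Union>a\<in>A. {..a})"
    unfolding set_div_nat_def by auto
  show "finite (\<Union>a\<in>A. {..a})"
    using assms by simp
qed

lemma cofinite_set_div_nat:
  assumes "finite (UNIV - A)" and "b \<in> B" and "b \<noteq> 0"
  shows "finite (UNIV - set_div_nat A B)"
proof (rule finite_subset)
  show "UNIV - set_div_nat A B \<subseteq> (\<lambda>c. c * b) -` (UNIV - A)"
    using assms(2,3) unfolding set_div_nat_def by auto
  have "inj (\<lambda>c. c * b)"
    using \<open>b \<noteq> 0\<close> by (simp add: inj_on_def)
  with assms(1) show "finite ((\<lambda>c. c * b) -` (UNIV - A))"
    by (rule finite_vimageI)
qed

lemma finite_or_cofinite_set_div_nat: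
  assumes "finite_or_cofinite A"
  shows "finite_or_cofinite (set_div_nat A B)"
proof (cases "finite A \<or> B - {0} = {}")
  case True
  moreover have "B - {0} = {} \<Longrightarrow> set_div_nat A B = {}"
    unfolding set_div_nat_def by blast
  ultimately show ?thesis
    using finite_set_div_nat unfolding finite_or_cofinite_def by fastforce
next
  case False
  then obtain b where "b \<in> B" "b \<noteq> 0" by blast
  with False assms show ?thesis
    using cofinite_set_div_nat unfolding finite_or_cofinite_def by blast
qed

lemma finite_edge_rel:
  assumes "is_circuit Ops C"
  shows "finite (edge_rel C)"
proof (rule finite_subset)
  show "edge_rel C \<subseteq> gates C \<times> gates C"
    using assms unfolding is_circuit_def edge_rel_def by auto
  show "finite (gates C \<times> gates C)"
    using assms unfolding is_circuit_def by simp
qed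

lemma wf_edge_rel: "is_circuit Ops C \<Longrightarrow> wf (edge_rel C)"
  using finite_edge_rel finite_acyclic_wf unfolding is_circuit_def by blast

lemma edge_rel_gates: "is_circuit Ops C \<Longrightarrow> (p, g) \<in> edge_rel C \<Longrightarrow> p \<in> gates C"
  unfolding is_circuit_def edge_rel_def by blast

lemma circuit_gate_cases:
  assumes "is_circuit Ops C" and "g \<in> gates C"
  obtains (input) n where "lab C g = LInput n"
  | (compl) "lab C g = LGate OCompl" "OCompl \<in> Ops" "(preds C g ! 0, g) \<in> edge_rel C"
  | (binary) \<sigma> where "lab C g = LGate \<sigma>" "\<sigma> \<in> Ops" "\<sigma> \<noteq> OCompl"
      "(preds C g ! 0, g) \<in> edge_rel C" "(preds C g ! 1, g) \<in> edge_rel C"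
proof -
  have gate: "length (preds C g) \<le> 2"
    "length (preds C g) = 0 \<Longrightarrow> \<exists>n. lab C g = LInput n"
    "length (preds C g) = 1 \<Longrightarrow> lab C g = LGate OCompl \<and> OCompl \<in> Ops"
    "length (preds C g) = 2 \<Longrightarrow> \<exists>\<sigma>. lab C g = LGate \<sigma> \<and> \<sigma> \<in> Ops \<and> \<sigma> \<noteq> OCompl"
    using assms unfolding is_circuit_def by blast+
  have edge: "i < length (preds C g) \<Longrightarrow> (preds C g ! i, g) \<in> edge_rel C" for i
    using \<open>g \<in> gates C\<close> unfolding edge_rel_def by auto
  consider "length (preds C g) = 0" | "length (preds C g) = 1" | "length (preds C g) = 2"
    using gate(1) by linarith
  then show ?thesis
    using gate(2-4) edge that by cases fastforce+
qed

lemma circuit_gate_induct [consumes 2, case_names input compl binary]: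
  assumes circuit: "is_circuit Ops C" and "g \<in> gates C"
    and input_step: "\<And>g n. g \<in> gates C \<Longrightarrow> lab C g = LInput n \<Longrightarrow> Q g"
    and compl_step: "\<And>g. g \<in> gates C \<Longrightarrow> lab C g = LGate OCompl \<Longrightarrow> OCompl \<in> Ops \<Longrightarrow>
      Q (preds C g ! 0) \<Longrightarrow> Q g"
    and binary_step: "\<And>g \<sigma>. g \<in> gates C \<Longrightarrow> lab C g = LGate \<sigma> \<Longrightarrow> \<sigma> \<in> Ops \<Longrightarrow> \<sigma> \<noteq> OCompl \<Longrightarrow>
      Q (preds C g ! 0) \<Longrightarrow> Q (preds C g ! 1) \<Longrightarrow> Q g"
  shows "Q g"
  using wf_edge_rel[OF circuit] \<open>g \<in> gates C\<close>
proof (induction g rule: wf_induct_rule)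
  case (less g)
  have IH: "(p, g) \<in> edge_rel C \<Longrightarrow> Q p" for p
    using less.IH edge_rel_gates[OF circuit] by blast
  from circuit \<open>g \<in> gates C\<close> show ?case
  proof (cases rule: circuit_gate_cases)
    case (input n)
    with \<open>g \<in> gates C\<close> show ?thesis by (rule input_step)
  next
    case compl
    show ?thesis by (rule compl_step[OF \<open>g \<in> gates C\<close> compl(1,2) IH[OF compl(3)]])
  next
    case (binary \<sigma>)
    show ?thesis
      by (rule binary_step[OF \<open>g \<in> gates C\<close> binary(1-3) IH[OF binary(4)] IH[OF binary(5)]])
  qed
qed

lemma is_eval_gate:
  assumes "is_eval C val" and "g \<in> gates C"
  shows "lab C g = LInput n \<Longrightarrow> val g = {n}"
    and "lab C g = LGate OCompl \<Longrightarrow> val g = UNIV - val (preds C g ! 0)"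
    and "lab C g = LGate \<sigma> \<Longrightarrow> \<sigma> \<noteq> OCompl \<Longrightarrow>
      val g = apply_op \<sigma> (val (preds C g ! 0)) (val (preds C g ! 1))"
  using assms unfolding is_eval_def by (auto split: op.splits)

lemma is_eval_unique:
  assumes circuit: "is_circuit Ops C" and "is_eval C v" and "is_eval C w" and "g \<in> gates C"
  shows "v g = w g"
  using circuit \<open>g \<in> gates C\<close>
  by (induction rule: circuit_gate_induct) (simp_all add: is_eval_gate[OF \<open>is_eval C v\<close>]
      is_eval_gate[OF \<open>is_eval C w\<close>])

definition eval_step :: "circuit \<Rightarrow> (nat \<Rightarrow> nat set) \<Rightarrow> nat \<Rightarrow> nat set" where
  "eval_step C f g = (case lab C g of
       LInput n \<Rightarrow> {n}
     | LGate OCompl \<Rightarrow> UNIV - f (preds C g ! 0)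
     | LGate \<sigma> \<Rightarrow> apply_op \<sigma> (f (preds C g ! 0)) (f (preds C g ! 1)))"

lemma is_eval_wfrec:
  assumes circuit: "is_circuit Ops C"
  shows "is_eval C (wfrec (edge_rel C) (eval_step C))"
  unfolding is_eval_def
proof
  fix g assume "g \<in> gates C"
  define v where "v = wfrec (edge_rel C) (eval_step C)"
  have v: "v g = eval_step C (cut v (edge_rel C) g) g"
    unfolding v_def by (rule wfrec[OF wf_edge_rel[OF circuit]])
  from circuit \<open>g \<in> gates C\<close> show "v g = (case lab C g of
       LInput n \<Rightarrow> {n}
     | LGate OCompl \<Rightarrow> UNIV - v (preds C g ! 0)
     | LGate \<sigma> \<Rightarrow> apply_op \<sigma> (v (preds C g ! 0)) (v (preds C g ! 1)))"
    by (cases rule: circuit_gate_cases)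
      (use v in \<open>simp_all add: eval_step_def cut_apply split: op.splits\<close>)
qed

lemma result_eq_eval:
  assumes circuit: "is_circuit Ops C" and "is_eval C val"
  shows "result C = val (outg C)"
  unfolding result_def
proof (rule the_equality)
  show "\<exists>v. is_eval C v \<and> v (outg C) = val (outg C)"
    using \<open>is_eval C val\<close> by blast
  have "outg C \<in> gates C"
    using circuit unfolding is_circuit_def by blast
  then show "S = val (outg C)" if "\<exists>v. is_eval C v \<and> v (outg C) = S" for S
    using that is_eval_unique[OF circuit _ \<open>is_eval C val\<close>] by blast
qed

lemma result_invariant:
  assumes circuit: "is_circuit Ops C"
    and singleton: "\<And>n. P {n}"
    and compl: "\<And>A. OCompl \<in> Ops \<Longrightarrow> P A \<Longrightarrow> P (UNIV - A)"
    and binary: "\<And>\<sigma> A B. \<sigma> \<in> Ops \<Longrightarrow> \<sigma> \<noteq> OCompl \<Longrightarrow> P A \<Longrightarrow> P B \<Longrightarrow> P (apply_op \<sigma> A B)"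
  shows "P (result C)"
proof -
  obtain v where eval: "is_eval C v"
    using is_eval_wfrec[OF circuit] by blast
  have "outg C \<in> gates C"
    using circuit unfolding is_circuit_def by blast
  with circuit have "P (v (outg C))"
    by (induction rule: circuit_gate_induct)
      (simp_all add: is_eval_gate[OF eval] singleton compl binary)
  then show ?thesis
    using result_eq_eval[OF circuit eval] by simp
qed

theorem corollary3:
  fixes A :: "nat set"
  assumes "infinite A" and "infinite (UNIV - A)"
  shows "\<not> (\<exists>C. is_circuit {OUn, OInt, OCompl, OPlus, ODiv} C \<and> result C = A)"
proof
  assume "\<exists>C. is_circuit {OUn, OInt, OCompl, OPlus, ODiv} C \<and> result C = A"
  then obtain C where circuit: "is_circuit {OUn, OInt, OCompl, OPlus, ODiv} C"
    and "result C = A" by blast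
  have "finite_or_cofinite (result C)"
    using circuit
  proof (rule result_invariant)
    fix \<sigma> and B D :: "nat set"
    assume "\<sigma> \<in> {OUn, OInt, OCompl, OPlus, ODiv}" and "finite_or_cofinite B" "finite_or_cofinite D"
    then show "finite_or_cofinite (apply_op \<sigma> B D)"
      by (auto simp: finite_or_cofinite_Un finite_or_cofinite_Int finite_or_cofinite_Compl
          finite_or_cofinite_set_plus_nat finite_or_cofinite_set_div_nat)
  qed (simp_all add: finite_or_cofinite_singleton finite_or_cofinite_Compl)
  with \<open>result C = A\<close> assms show False
    unfolding finite_or_cofinite_def by blast
qed

end
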